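(* Consider the quantized estimation system described in the context. Assume (i) the interior of $\Theta$ in $\mathbb{R}^{D_\theta}$ is nonempty, and (ii) for every $j$ and every $\mathbf{s}\in\mathcal{S}_j$, $q_j^{(\mathbf{s})}(\theta)$ is continuous in $\theta$. Then for any quantization regions $\{I_{jl}^{(r)}\}$ and any statistical models $\{(\mathscr{X}_j,\mathscr{F}_j,\mathscr{P}_j^\theta)\}$, if $$D_\theta>\lambda(N,\{R_{jl}\}):=\sum_{j=1}^N\prod_{l=1}^{L_j}R_{jl}-N,$$ then the parameter space $\Theta$ is not identifiable. Moreover, for any subset $\mathcal{U}\subset\Theta$ that is open in $\mathbb{R}^{D_\theta}$, there are infinitely many parameter points in $\mathcal{U}$ which are not identifiable.
   Context: Setting: $\Theta\subset\mathbb{R}^{D_\theta}$ is a parameter set. There are $N\ge 1$ sensors. Sensor $j$ observes a random vector $\mathbf{x}_j$ with statistical model $(\mathscr{X}_j,\mathscr{F}_j,\mathscr{P}_j^\theta)$ (law $\mathscr{P}_j^\theta$ on the measurable space $(\mathscr{X}_j,\mathscr{F}_j)$, indexed by $\theta\in\Theta$); $\mathbf{x}_1,\dots,\mathbf{x}_N$ are independent. Each $\mathbf{x}_j$ is partitioned into $L_j\ge1$ disjoint subvectors $\mathbf{x}_j=[\mathbf{x}_{j1}^T,\dots,\mathbf{x}_{jL_j}^T]^T$. For each $j,l$, $\gamma_{jl}$ is an $R_{jl}$-level vector quantizer: disjoint regions $I_{jl}^{(1)},\dots,I_{jl}^{(R_{jl})}$ cover its domain and $\gamma_{jl}(\mathbf{x}_{jl})=r$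 iff $\mathbf{x}_{jl}\in I_{jl}^{(r)}$. The (measurable) superquantizer is $\Gamma_j(\mathbf{x}_j)=[\gamma_{j1}(\mathbf{x}_{j1}),\dots,\gamma_{jL_j}(\mathbf{x}_{jL_j})]^T$; the fusion center receives $\mathbf{u}=[\mathbf{u}_1^T,\dots,\mathbf{u}_N^T]^T$, $\mathbf{u}_j=\Gamma_j(\mathbf{x}_j)$. $\mathcal{S}_j$ is the set of all possible outcomes of $\Gamma_j$, $q_j^{(\mathbf{s})}(\theta)=\mathscr{P}_j^\theta(\Gamma_j(\mathbf{x}_j)=\mathbf{s})$, and $\Pr(\mathbf{u}\mid\theta)=\prod_{j=1}^N q_j^{(\mathbf{u}_j)}(\theta)$. Two distinct $\theta,\theta'\in\Theta$ are observationally equivalent if $\Pr(\mathbf{u}\mid\theta)=\Pr(\mathbf{u}\mid\theta')$ for all possible $\mathbf{u}$. A point $\theta$ is identifiable if no $\theta'\in\Theta\setminus\{\theta\}$ is observationally equivalent to it; $\Theta$ is identifiable if every point of $\Theta$ is identifiable. *)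

theory Defs
  imports "HOL-Probability.Probability"
begin

text \<open>
  Sensors are indexed by j < N.  The observation of sensor j is a
  function x :: nat \<Rightarrow> 'y whose value x l (for l < L j) is the l-th subvector x_jl.
  The quantization regions are I j l r (r = 1..R j l), subsets of the subvector space.
  The law of sensor j's observation under parameter theta is the measure P j theta.
\<close>

definition quant :: "(nat \<Rightarrow> nat \<Rightarrow> nat \<Rightarrow> 'y set) \<Rightarrow> (nat \<Rightarrow> nat \<Rightarrow> nat) \<Rightarrow> nat \<Rightarrow> nat \<Rightarrow> 'y \<Rightarrow> nat"
  where "quant I R j l y = (THE r. r \<in> {1..R j l} \<and> y \<in> I j l r)"

text \<open>The superquantizer Gamma_j (components beyond L j are set to 0 as padding).\<close>
definition superquant :: "(nat \<Rightarrow> nat \<Rightarrow> nat \<Rightarrow> 'y set) \<Rightarrow> (nat \<Rightarrow> nat \<Rightarrow> nat) \<Rightarrow> (nat \<Rightarrow> nat)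
    \<Rightarrow> nat \<Rightarrow> (nat \<Rightarrow> 'y) \<Rightarrow> (nat \<Rightarrow> nat)"
  where "superquant I R L j x = (\<lambda>l. if l < L j then quant I R j l (x l) else 0)"

definition outcomes :: "(nat \<Rightarrow> nat \<Rightarrow> nat \<Rightarrow> 'y set) \<Rightarrow> (nat \<Rightarrow> nat \<Rightarrow> nat) \<Rightarrow> (nat \<Rightarrow> nat)
    \<Rightarrow> (nat \<Rightarrow> (nat \<Rightarrow> 'y) set) \<Rightarrow> nat \<Rightarrow> (nat \<Rightarrow> nat) set"
  where "outcomes I R L X j = superquant I R L j ` X j"

definition qprob :: "(nat \<Rightarrow> 'p \<Rightarrow> (nat \<Rightarrow> 'y) measure) \<Rightarrow> (nat \<Rightarrow> nat \<Rightarrow> nat \<Rightarrow> 'y set)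
    \<Rightarrow> (nat \<Rightarrow> nat \<Rightarrow> nat) \<Rightarrow> (nat \<Rightarrow> nat) \<Rightarrow> nat \<Rightarrow> (nat \<Rightarrow> nat) \<Rightarrow> 'p \<Rightarrow> real"
  where "qprob P I R L j s \<theta> =
           measure (P j \<theta>) {x \<in> space (P j \<theta>). superquant I R L j x = s}"

text \<open>Pr(u | theta) = prod_j q_j^(u_j)(theta) (independent sensors).\<close>
definition PrU :: "(nat \<Rightarrow> 'p \<Rightarrow> (nat \<Rightarrow> 'y) measure) \<Rightarrow> (nat \<Rightarrow> nat \<Rightarrow> nat \<Rightarrow> 'y set)
    \<Rightarrow> (nat \<Rightarrow> nat \<Rightarrow> nat) \<Rightarrow> (nat \<Rightarrow> nat) \<Rightarrow> nat \<Rightarrow> (nat \<Rightarrow> nat \<Rightarrow> nat) \<Rightarrow> 'p \<Rightarrow> real"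
  where "PrU P I R L N u \<theta> = (\<Prod>j<N. qprob P I R L j (u j) \<theta>)"

definition possible_msg :: "(nat \<Rightarrow> nat \<Rightarrow> nat \<Rightarrow> 'y set) \<Rightarrow> (nat \<Rightarrow> nat \<Rightarrow> nat) \<Rightarrow> (nat \<Rightarrow> nat)
    \<Rightarrow> (nat \<Rightarrow> (nat \<Rightarrow> 'y) set) \<Rightarrow> nat \<Rightarrow> (nat \<Rightarrow> nat \<Rightarrow> nat) \<Rightarrow> bool"
  where "possible_msg I R L X N u = (\<forall>j<N. u j \<in> outcomes I R L X j)"

definition obs_equiv :: "(nat \<Rightarrow> 'p \<Rightarrow> (nat \<Rightarrow> 'y) measure) \<Rightarrow> (nat \<Rightarrow> nat \<Rightarrow> nat \<Rightarrow> 'y set)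
    \<Rightarrow> (nat \<Rightarrow> nat \<Rightarrow> nat) \<Rightarrow> (nat \<Rightarrow> nat) \<Rightarrow> (nat \<Rightarrow> (nat \<Rightarrow> 'y) set) \<Rightarrow> nat
    \<Rightarrow> 'p \<Rightarrow> 'p \<Rightarrow> bool"
  where "obs_equiv P I R L X N \<theta> \<theta>' =
          (\<theta> \<noteq> \<theta>' \<and> (\<forall>u. possible_msg I R L X N u \<longrightarrow> PrU P I R L N u \<theta> = PrU P I R L N u \<theta>'))"

definition identifiable_point :: "(nat \<Rightarrow> 'p \<Rightarrow> (nat \<Rightarrow> 'y) measure) \<Rightarrow> (nat \<Rightarrow> nat \<Rightarrow> nat \<Rightarrow> 'y set)
    \<Rightarrow> (nat \<Rightarrow> nat \<Rightarrow> nat) \<Rightarrow> (nat \<Rightarrow> nat) \<Rightarrow> (nat \<Rightarrow> (nat \<Rightarrow> 'y) set) \<Rightarrow> nat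
    \<Rightarrow> 'p set \<Rightarrow> 'p \<Rightarrow> bool"
  where "identifiable_point P I R L X N \<Theta> \<theta> =
          (\<not> (\<exists>\<theta>'\<in>\<Theta> - {\<theta>}. obs_equiv P I R L X N \<theta> \<theta>'))"

definition identifiable_set :: "(nat \<Rightarrow> 'p \<Rightarrow> (nat \<Rightarrow> 'y) measure) \<Rightarrow> (nat \<Rightarrow> nat \<Rightarrow> nat \<Rightarrow> 'y set)
    \<Rightarrow> (nat \<Rightarrow> nat \<Rightarrow> nat) \<Rightarrow> (nat \<Rightarrow> nat) \<Rightarrow> (nat \<Rightarrow> (nat \<Rightarrow> 'y) set) \<Rightarrow> nat
    \<Rightarrow> 'p set \<Rightarrow> bool"
  where "identifiable_set P I R L X N \<Theta> =
          (\<forall>\<theta>\<in>\<Theta>. identifiable_point P I R L X N \<Theta> \<theta>)"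

end

theory Submission
  imports Defs "HOL-Homology.Invariance_of_Domain"
begin

text \<open>
  The law of the message is a function of the probabilities q_j^(s)(\<theta>), and since those of each
  sensor sum to one, \<lambda> = \<Sum>_j \<Prod>_l R_jl - N of them determine all the others. So \<theta> is mapped
  continuously into \<real>^\<lambda> with \<lambda> < D_\<theta>; by invariance of dimension this map is not injective on
  any nonempty open set, which therefore contains two observationally equivalent points.
  Removing finitely many points from an open set leaves a nonempty open set, so each open
  U \<subseteq> \<Theta> contains infinitely many non-identifiable points.
\<close>

lemma continuous_family_not_separating:
  fixes V :: "'a::euclidean_space set" and h :: "'i \<Rightarrow> 'a \<Rightarrow> real"
  assumes "finite A" "card A < DIM('a)" "open V" "V \<noteq> {}"
    and cont: "\<And>i. i \<in> A \<Longrightarrow> continuous_on V (h i)"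
  shows "\<exists>x\<in>V. \<exists>y\<in>V. x \<noteq> y \<and> (\<forall>i\<in>A. h i x = h i y)"
proof -
  have "\<exists>b. b ` A \<subseteq> (Basis :: 'a set) \<and> inj_on b A"
    using assms(1,2) by (intro card_le_inj) auto
  then obtain b where b: "b ` A \<subseteq> (Basis :: 'a set)" "inj_on b A"
    by blast
  define f where "f x = (\<Sum>i\<in>A. h i x *\<^sub>R b i)" for x
  have coord: "f x \<bullet> b i = h i x" if "i \<in> A" for x i
  proof -
    have "b k \<bullet> b i = (if k = i then 1 else 0)" if "k \<in> A" for k
      using b \<open>i \<in> A\<close> that by (simp add: inner_Basis inj_on_eq_iff image_subset_iff)
    then have "f x \<bullet> b i = (\<Sum>k\<in>A. if k = i then h k x else 0)"
      unfolding f_def inner_sum_left inner_scaleR_left by (intro sum.cong) auto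
    then show ?thesis
      using \<open>finite A\<close> \<open>i \<in> A\<close> by simp
  qed
  have "\<not> inj_on f V"
  proof
    assume "inj_on f V"
    moreover have "continuous_on V f"
      unfolding f_def by (intro continuous_intros cont)
    moreover have "f ` V \<subseteq> span (b ` A)"
      unfolding f_def by (intro image_subsetI span_sum span_scale span_base imageI)
    ultimately have "dim (UNIV :: 'a set) \<le> dim (span (b ` A))"
      using \<open>open V\<close> \<open>V \<noteq> {}\<close> by (intro invariance_of_dimension_subspaces) auto
    also have "\<dots> \<le> card A"
      using \<open>finite A\<close> dim_le_card' card_image_le by (metis dim_span finite_imageI order.trans)
    finally show False using assms(2) by simp
  qed
  then obtain x y where "x \<in> V" "y \<in> V" "x \<noteq> y" "f x = f y"
    unfolding inj_on_def by blast
  then show ?thesis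
    using coord by metis
qed

lemma infinite_if_meets_every_open_subset:
  fixes U :: "'a::{real_normed_vector, perfect_space} set"
  assumes "open U" "U \<noteq> {}"
    and meets: "\<And>V. open V \<Longrightarrow> V \<noteq> {} \<Longrightarrow> V \<subseteq> U \<Longrightarrow> \<exists>x\<in>V. Q x"
  shows "infinite {x \<in> U. Q x}"
proof
  assume fin: "finite {x \<in> U. Q x}"
  then have "open (U - {x \<in> U. Q x})"
    using \<open>open U\<close> by (intro open_Diff finite_imp_closed)
  moreover have "U - {x \<in> U. Q x} \<noteq> {}"
    using fin finite_imp_not_open assms(1,2) by (metis Diff_eq_empty_iff finite_subset)
  ultimately show False
    using meets[of "U - {x \<in> U. Q x}"] by blast
qed

lemma sum_eq_imp_eq_at_remaining_point:
  fixes f g :: "'a \<Rightarrow> 'b::ab_group_add"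
  assumes "finite S" "a \<in> S" "sum f S = sum g S" "\<And>s. s \<in> S - {a} \<Longrightarrow> f s = g s"
  shows "f a = g a"
proof -
  have "sum f (S - {a}) = sum g (S - {a})"
    using assms(4) by (rule sum.cong[OF refl])
  then show ?thesis
    using assms(3) sum.remove[OF assms(1,2), of f] sum.remove[OF assms(1,2), of g] by simp
qed

lemma quant_in_levels:
  assumes "\<And>r r'. r \<in> {1..R j l} \<Longrightarrow> r' \<in> {1..R j l} \<Longrightarrow> r \<noteq> r' \<Longrightarrow> I j l r \<inter> I j l r' = {}"
    and "y \<in> (\<Union>r\<in>{1..R j l}. I j l r)"
  shows "quant I R j l y \<in> {1..R j l}"
proof -
  have "\<exists>!r. r \<in> {1..R j l} \<and> y \<in> I j l r"
    using assms by blast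
  from theI'[OF this] show ?thesis
    unfolding quant_def by blast
qed

locale quantized_system =
  fixes P :: "nat \<Rightarrow> 'p \<Rightarrow> (nat \<Rightarrow> 'y) measure"
    and I :: "nat \<Rightarrow> nat \<Rightarrow> nat \<Rightarrow> 'y set"
    and R :: "nat \<Rightarrow> nat \<Rightarrow> nat"
    and L :: "nat \<Rightarrow> nat"
    and X :: "nat \<Rightarrow> (nat \<Rightarrow> 'y) set"
    and F :: "nat \<Rightarrow> (nat \<Rightarrow> 'y) set set"
    and N :: nat
    and \<Theta> :: "'p set"
  assumes model_space: "\<And>j \<theta>. j < N \<Longrightarrow> \<theta> \<in> \<Theta> \<Longrightarrow> space (P j \<theta>) = X j"
    and model_sets: "\<And>j \<theta>. j < N \<Longrightarrow> \<theta> \<in> \<Theta> \<Longrightarrow> sets (P j \<theta>) = F j"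
    and model_prob: "\<And>j \<theta>. j < N \<Longrightarrow> \<theta> \<in> \<Theta> \<Longrightarrow> prob_space (P j \<theta>)"
    and regions_disjoint: "\<And>j l r r'. j < N \<Longrightarrow> l < L j \<Longrightarrow> r \<in> {1..R j l} \<Longrightarrow> r' \<in> {1..R j l}
                             \<Longrightarrow> r \<noteq> r' \<Longrightarrow> I j l r \<inter> I j l r' = {}"
    and regions_cover: "\<And>j l x. j < N \<Longrightarrow> l < L j \<Longrightarrow> x \<in> X j
                             \<Longrightarrow> x l \<in> (\<Union>r\<in>{1..R j l}. I j l r)"
    and superquant_measurable: "\<And>j s. j < N \<Longrightarrow> {x \<in> X j. superquant I R L j x = s} \<in> F j"
    and Theta_nonempty: "\<Theta> \<noteq> {}"
begin

lemma outcomes_subset_padded_PiE: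
  assumes "j < N"
  shows "outcomes I R L X j
           \<subseteq> (\<lambda>g l. if l < L j then g l else 0) ` (\<Pi>\<^sub>E l\<in>{..<L j}. {1..R j l})"
proof
  fix s assume "s \<in> outcomes I R L X j"
  then obtain x where x: "x \<in> X j" "s = superquant I R L j x"
    unfolding outcomes_def by blast
  let ?g = "restrict (\<lambda>l. quant I R j l (x l)) {..<L j}"
  have "?g \<in> (\<Pi>\<^sub>E l\<in>{..<L j}. {1..R j l})"
    using quant_in_levels[of R j _ I] regions_disjoint regions_cover assms x(1) by auto
  moreover have "s = (\<lambda>l. if l < L j then ?g l else 0)"
    using x(2) unfolding superquant_def by auto
  ultimately show "s \<in> (\<lambda>g l. if l < L j then g l else 0) ` (\<Pi>\<^sub>E l\<in>{..<L j}. {1..R j l})"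
    by blast
qed

lemma finite_outcomes: "j < N \<Longrightarrow> finite (outcomes I R L X j)"
  by (rule finite_subset[OF outcomes_subset_padded_PiE]) (auto intro: finite_PiE)

lemma card_outcomes_le:
  assumes "j < N"
  shows "card (outcomes I R L X j) \<le> (\<Prod>l<L j. R j l)"
proof -
  let ?T = "\<Pi>\<^sub>E l\<in>{..<L j}. {1..R j l}"
  have "card (outcomes I R L X j) \<le> card ((\<lambda>g l. if l < L j then g l else 0) ` ?T)"
    by (intro card_mono finite_imageI finite_PiE outcomes_subset_padded_PiE assms) auto
  also have "\<dots> \<le> card ?T"
    by (intro card_image_le finite_PiE) auto
  also have "\<dots> = (\<Prod>l<L j. R j l)"
    by (simp add: card_PiE)
  finally show ?thesis .
qed

lemma outcomes_nonempty:
  assumes "j < N"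
  shows "outcomes I R L X j \<noteq> {}"
proof -
  obtain \<theta> where "\<theta> \<in> \<Theta>"
    using Theta_nonempty by blast
  then have "X j \<noteq> {}"
    using model_space model_prob prob_space.not_empty assms by metis
  then show ?thesis
    unfolding outcomes_def by blast
qed

lemma sum_qprob_outcomes:
  assumes "j < N" "\<theta> \<in> \<Theta>"
  shows "(\<Sum>s\<in>outcomes I R L X j. qprob P I R L j s \<theta>) = 1"
proof -
  interpret prob_space "P j \<theta>"
    using model_prob[OF assms] .
  define A where "A s = {x \<in> space (P j \<theta>). superquant I R L j x = s}" for s
  have "prob (\<Union>s\<in>outcomes I R L X j. A s) = (\<Sum>s\<in>outcomes I R L X j. prob (A s))"
  proof (rule finite_measure_finite_Union)
    show "A ` outcomes I R L X j \<subseteq> events"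
      using superquant_measurable[OF assms(1)] model_space[OF assms] model_sets[OF assms]
      unfolding A_def by auto
    show "disjoint_family_on A (outcomes I R L X j)"
      unfolding disjoint_family_on_def A_def by auto
  qed (rule finite_outcomes[OF assms(1)])
  moreover have "(\<Union>s\<in>outcomes I R L X j. A s) = space (P j \<theta>)"
    unfolding A_def outcomes_def using model_space[OF assms] by auto
  ultimately show ?thesis
    unfolding qprob_def A_def by (simp add: prob_space)
qed

text \<open>One outcome per sensor is dropped, since its probability is fixed by the others; the
  remaining pairs are the \<lambda>(N, {R_jl}) free coordinates of the message distribution.\<close>
definition free_outcomes :: "(nat \<times> (nat \<Rightarrow> nat)) set" where
  "free_outcomes = (SIGMA j:{..<N}. outcomes I R L X j - {SOME s. s \<in> outcomes I R L X j})"

lemma finite_free_outcomes: "finite free_outcomes"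
  unfolding free_outcomes_def using finite_outcomes by auto

lemma card_free_outcomes_le:
  "int (card free_outcomes) \<le> (\<Sum>j<N. \<Prod>l<L j. int (R j l)) - int N"
proof -
  have bound: "int (card (outcomes I R L X j - {SOME s. s \<in> outcomes I R L X j}))
                 \<le> (\<Prod>l<L j. int (R j l)) - 1" if "j < N" for j
  proof -
    have "(SOME s. s \<in> outcomes I R L X j) \<in> outcomes I R L X j"
      using outcomes_nonempty[OF that] by (simp add: some_in_eq)
    then show ?thesis
      using finite_outcomes[OF that] card_outcomes_le[OF that] outcomes_nonempty[OF that]
      by (simp add: card_gt_0_iff Suc_leI of_nat_diff flip: of_nat_prod)
  qed
  have "int (card free_outcomes)
          = (\<Sum>j<N. int (card (outcomes I R L X j - {SOME s. s \<in> outcomes I R L X j})))"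
    unfolding free_outcomes_def using finite_outcomes by (simp add: card_SigmaI of_nat_sum)
  also have "\<dots> \<le> (\<Sum>j<N. (\<Prod>l<L j. int (R j l)) - 1)"
    by (rule sum_mono) (rule bound, simp)
  also have "\<dots> = (\<Sum>j<N. \<Prod>l<L j. int (R j l)) - int N"
    by (simp add: sum_subtractf)
  finally show ?thesis .
qed

lemma obs_equiv_if_free_outcomes_agree:
  assumes "\<theta> \<in> \<Theta>" "\<theta>' \<in> \<Theta>" "\<theta> \<noteq> \<theta>'"
    and agree: "\<And>j s. (j, s) \<in> free_outcomes \<Longrightarrow> qprob P I R L j s \<theta> = qprob P I R L j s \<theta>'"
  shows "obs_equiv P I R L X N \<theta> \<theta>'"
proof -
  have "qprob P I R L j s \<theta> = qprob P I R L j s \<theta>'" if "j < N" "s \<in> outcomes I R L X j" for j s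
  proof (cases "(j, s) \<in> free_outcomes")
    case False
    then have "s = (SOME s. s \<in> outcomes I R L X j)"
      using that unfolding free_outcomes_def by blast
    show ?thesis
    proof (rule sum_eq_imp_eq_at_remaining_point[where f = "\<lambda>s. qprob P I R L j s \<theta>"
                                                    and g = "\<lambda>s. qprob P I R L j s \<theta>'"])
      show "(\<Sum>s\<in>outcomes I R L X j. qprob P I R L j s \<theta>) = (\<Sum>s\<in>outcomes I R L X j. qprob P I R L j s \<theta>')"
        using sum_qprob_outcomes \<open>j < N\<close> assms(1,2) by simp
      show "qprob P I R L j t \<theta> = qprob P I R L j t \<theta>'"
        if "t \<in> outcomes I R L X j - {s}" for t
        using agree \<open>j < N\<close> that \<open>s = (SOME s. s \<in> outcomes I R L X j)\<close>
        unfolding free_outcomes_def by blast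
    qed (use that finite_outcomes in simp_all)
  qed (rule agree)
  then show ?thesis
    using \<open>\<theta> \<noteq> \<theta>'\<close> unfolding obs_equiv_def possible_msg_def PrU_def
    by (auto intro!: prod.cong)
qed

end

locale continuous_quantized_system = quantized_system P I R L X F N \<Theta>
  for P :: "nat \<Rightarrow> 'p::euclidean_space \<Rightarrow> (nat \<Rightarrow> 'y) measure"
    and I R L X F N \<Theta> +
  assumes q_continuous: "\<And>j s. j < N \<Longrightarrow> s \<in> outcomes I R L X j
                             \<Longrightarrow> continuous_on \<Theta> (qprob P I R L j s)"
    and dim_large: "int DIM('p) > (\<Sum>j<N. \<Prod>l<L j. int (R j l)) - int N"
begin

lemma nonidentifiable_point_in_open:
  assumes V: "open V" "V \<noteq> {}" "V \<subseteq> \<Theta>"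
  shows "\<exists>\<theta>\<in>V. \<not> identifiable_point P I R L X N \<Theta> \<theta>"
proof -
  have few: "card free_outcomes < DIM('p)"
    using card_free_outcomes_le dim_large by simp
  have cont: "continuous_on V (case_prod (qprob P I R L) p)" if p: "p \<in> free_outcomes" for p
  proof -
    obtain j s where "p = (j, s)" "j < N" "s \<in> outcomes I R L X j"
      using p unfolding free_outcomes_def by blast
    then show ?thesis
      using continuous_on_subset[OF q_continuous V(3)] by simp
  qed
  have "\<exists>\<theta>\<in>V. \<exists>\<theta>'\<in>V. \<theta> \<noteq> \<theta>' \<and>
          (\<forall>p\<in>free_outcomes. case_prod (qprob P I R L) p \<theta> = case_prod (qprob P I R L) p \<theta>')"
    by (rule continuous_family_not_separating[OF finite_free_outcomes few V(1,2) cont])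
  then obtain \<theta> \<theta>' where "\<theta> \<in> V" "\<theta>' \<in> V" "\<theta> \<noteq> \<theta>'"
    and agree: "\<forall>p\<in>free_outcomes. case_prod (qprob P I R L) p \<theta> = case_prod (qprob P I R L) p \<theta>'"
    by blast
  have "obs_equiv P I R L X N \<theta> \<theta>'"
    using V(3) \<open>\<theta> \<in> V\<close> \<open>\<theta>' \<in> V\<close> \<open>\<theta> \<noteq> \<theta>'\<close> agree
    by (intro obs_equiv_if_free_outcomes_agree) auto
  moreover have "\<theta>' \<in> \<Theta> - {\<theta>}"
    using V(3) \<open>\<theta>' \<in> V\<close> \<open>\<theta> \<noteq> \<theta>'\<close> by auto
  ultimately show ?thesis
    using \<open>\<theta> \<in> V\<close> unfolding identifiable_point_def by blast
qed

lemma not_identifiable_set: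
  assumes "interior \<Theta> \<noteq> {}"
  shows "\<not> identifiable_set P I R L X N \<Theta>"
  using nonidentifiable_point_in_open[of "interior \<Theta>"] assms interior_subset
  unfolding identifiable_set_def by blast

lemma infinite_nonidentifiable_points:
  assumes "open U" "U \<noteq> {}" "U \<subseteq> \<Theta>"
  shows "infinite {\<theta> \<in> U. \<not> identifiable_point P I R L X N \<Theta> \<theta>}"
  using assms by (intro infinite_if_meets_every_open_subset nonidentifiable_point_in_open) auto

end

theorem theorem2:
  fixes \<Theta> :: "(real ^ 'd) set"
    and N :: nat
    and L :: "nat \<Rightarrow> nat"
    and R :: "nat \<Rightarrow> nat \<Rightarrow> nat"
    and I :: "nat \<Rightarrow> nat \<Rightarrow> nat \<Rightarrow> 'y set"
    and X :: "nat \<Rightarrow> (nat \<Rightarrow> 'y) set"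
    and F :: "nat \<Rightarrow> (nat \<Rightarrow> 'y) set set"
    and P :: "nat \<Rightarrow> real ^ 'd \<Rightarrow> (nat \<Rightarrow> 'y) measure"
  assumes N_pos: "N \<ge> 1"
    and L_pos: "\<And>j. j < N \<Longrightarrow> L j \<ge> 1"
    and R_pos: "\<And>j l. j < N \<Longrightarrow> l < L j \<Longrightarrow> R j l \<ge> 1"
    and model_space: "\<And>j \<theta>. j < N \<Longrightarrow> \<theta> \<in> \<Theta> \<Longrightarrow> space (P j \<theta>) = X j"
    and model_sets: "\<And>j \<theta>. j < N \<Longrightarrow> \<theta> \<in> \<Theta> \<Longrightarrow> sets (P j \<theta>) = F j"
    and model_prob: "\<And>j \<theta>. j < N \<Longrightarrow> \<theta> \<in> \<Theta> \<Longrightarrow> prob_space (P j \<theta>)"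
    and regions_disjoint: "\<And>j l r r'. j < N \<Longrightarrow> l < L j \<Longrightarrow> r \<in> {1..R j l} \<Longrightarrow> r' \<in> {1..R j l}
                             \<Longrightarrow> r \<noteq> r' \<Longrightarrow> I j l r \<inter> I j l r' = {}"
    and regions_cover: "\<And>j l x. j < N \<Longrightarrow> l < L j \<Longrightarrow> x \<in> X j
                             \<Longrightarrow> x l \<in> (\<Union>r\<in>{1..R j l}. I j l r)"
    and superquant_measurable: "\<And>j s. j < N \<Longrightarrow> {x \<in> X j. superquant I R L j x = s} \<in> F j"
    and interior_nonempty: "interior \<Theta> \<noteq> {}"
    and q_continuous: "\<And>j s. j < N \<Longrightarrow> s \<in> outcomes I R L X j
                             \<Longrightarrow> continuous_on \<Theta> (qprob P I R L j s)"
    and dim_large: "int CARD('d) > (\<Sum>j<N. \<Prod>l<L j. int (R j l)) - int N"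
  shows "\<not> identifiable_set P I R L X N \<Theta> \<and>
         (\<forall>U. open U \<and> U \<noteq> {} \<and> U \<subseteq> \<Theta> \<longrightarrow>
              infinite {\<theta> \<in> U. \<not> identifiable_point P I R L X N \<Theta> \<theta>})"
proof -
  interpret continuous_quantized_system P I R L X F N \<Theta>
  proof (intro continuous_quantized_system.intro quantized_system.intro
      continuous_quantized_system_axioms.intro)
    show "\<Theta> \<noteq> {}"
      using interior_nonempty interior_subset by blast
    show "int DIM(real ^ 'd) > (\<Sum>j<N. \<Prod>l<L j. int (R j l)) - int N"
      using dim_large by simp
  qed fact+
  show ?thesis
    using not_identifiable_set[OF interior_nonempty] infinite_nonidentifiable_points by blast
qed

end
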